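(* Let $S,T$ be left semi-braces whose associated maps $r_S$ and $r_T$ are solutions. Let $\sigma:T\to\mathrm{Aut}(S)$ be a homomorphism from $(T,\cdot)$ into the automorphism group of $(S,+,\cdot)$ (${}^ua=\sigma(u)(a)$), $\delta:S\to\mathrm{End}(T,+)$ a map ($u^a=\delta(a)(u)$), and $\mathfrak b:S\times S\to T$ a $\delta$-cocycle satisfying $\mathfrak b(a\,{}^ub,\lambda_a({}^uc))+(uv)^{\lambda_a({}^uc)}+u(\mathfrak b({}^{u^{-1}}(a^{-1}),c)+(u^{-1})^c)=u(\mathfrak b(b,c)+v^c)$ for all $a,b,c\in S$, $u,v\in T$; let $B$ be the asymmetric product $S\times T$ with $(a,u)+(b,v)=(a+b,\mathfrak b(a,b)+u^b+v)$, $(a,u)(b,v)=(a\,{}^ub,uv)$. If for all $a,b\in S$ and $u\in T$: (1) $(u^1)^a=u^a$; (2) $\mathfrak b(1,a)+u=1+u$; (3) $\mathfrak b(a,1+b)=\mathfrak b(a,b)$, (where $1$ denotes the identity of $(S,\cdot)$ when it appears in $S$ and the identity of $(T,\cdot)$ when it appears in $T$), then the map $r_B$ associated to $B$ is a solution.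
   Context: A left semi-brace is a triple $(S,+,\cdot)$ such that $(S,+)$ is a semigroup, $(S,\cdot)$ is a group with identity $1$, and $a(b+c)=ab+a(a^{-1}+c)$ for all $a,b,c$. Set $\lambda_a(b)=a(a^{-1}+b)$, $\rho_b(a)=(a^{-1}+b)^{-1}b$; the map associated to $X$ is $r_X(x,y)=(\lambda_x(y),\rho_y(x))$. A solution is a map $r:X\times X\to X\times X$ with $(r\times\mathrm{id})(\mathrm{id}\times r)(r\times\mathrm{id})=(\mathrm{id}\times r)(r\times\mathrm{id})(\mathrm{id}\times r)$. An automorphism of $(S,+,\cdot)$ is a bijection preserving both operations. A $\delta$-cocycle is a map $\mathfrak b:S\times S\to T$ with $\mathfrak b(a+b,c)+\mathfrak b(a,b)^c+(u^b)^c+v^c=\mathfrak b(a,b+c)+u^{b+c}+\mathfrak b(b,c)+v^c$ for all $a,b,c\in S$, $u,v\in T$. *)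

theory Defs
  imports Main
begin

definition group_ops :: "('a \<Rightarrow> 'a \<Rightarrow> 'a) \<Rightarrow> 'a \<Rightarrow> ('a \<Rightarrow> 'a) \<Rightarrow> bool" where
  "group_ops mult one iv \<longleftrightarrow>
     (\<forall>a b c. mult (mult a b) c = mult a (mult b c)) \<and>
     (\<forall>a. mult one a = a \<and> mult a one = a) \<and>
     (\<forall>a. mult (iv a) a = one \<and> mult a (iv a) = one)"

definition semigroup_op :: "('a \<Rightarrow> 'a \<Rightarrow> 'a) \<Rightarrow> bool" where
  "semigroup_op add \<longleftrightarrow> (\<forall>a b c. add (add a b) c = add a (add b c))"

definition left_semi_brace ::
  "('a \<Rightarrow> 'a \<Rightarrow> 'a) \<Rightarrow> ('a \<Rightarrow> 'a \<Rightarrow> 'a) \<Rightarrow> 'a \<Rightarrow> ('a \<Rightarrow> 'a) \<Rightarrow> bool" where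
  "left_semi_brace add mult one iv \<longleftrightarrow>
     semigroup_op add \<and> group_ops mult one iv \<and>
     (\<forall>a b c. mult a (add b c) = add (mult a b) (mult a (add (iv a) c)))"

definition lam :: "('a \<Rightarrow> 'a \<Rightarrow> 'a) \<Rightarrow> ('a \<Rightarrow> 'a \<Rightarrow> 'a) \<Rightarrow> ('a \<Rightarrow> 'a) \<Rightarrow> 'a \<Rightarrow> 'a \<Rightarrow> 'a" where
  "lam add mult iv a b = mult a (add (iv a) b)"

definition rho :: "('a \<Rightarrow> 'a \<Rightarrow> 'a) \<Rightarrow> ('a \<Rightarrow> 'a \<Rightarrow> 'a) \<Rightarrow> ('a \<Rightarrow> 'a) \<Rightarrow> 'a \<Rightarrow> 'a \<Rightarrow> 'a" where
  "rho add mult iv b a = mult (iv (add (iv a) b)) b"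

definition assoc_map :: "('a \<Rightarrow> 'a \<Rightarrow> 'a) \<Rightarrow> ('a \<Rightarrow> 'a \<Rightarrow> 'a) \<Rightarrow> ('a \<Rightarrow> 'a) \<Rightarrow> 'a \<times> 'a \<Rightarrow> 'a \<times> 'a" where
  "assoc_map add mult iv = (\<lambda>(x, y). (lam add mult iv x y, rho add mult iv y x))"

definition r12 :: "('a \<times> 'a \<Rightarrow> 'a \<times> 'a) \<Rightarrow> 'a \<times> 'a \<times> 'a \<Rightarrow> 'a \<times> 'a \<times> 'a" where
  "r12 r = (\<lambda>(x, y, z). (fst (r (x, y)), snd (r (x, y)), z))"

definition r23 :: "('a \<times> 'a \<Rightarrow> 'a \<times> 'a) \<Rightarrow> 'a \<times> 'a \<times> 'a \<Rightarrow> 'a \<times> 'a \<times> 'a" where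
  "r23 r = (\<lambda>(x, y, z). (x, fst (r (y, z)), snd (r (y, z))))"

definition is_solution :: "('a \<times> 'a \<Rightarrow> 'a \<times> 'a) \<Rightarrow> bool" where
  "is_solution r \<longleftrightarrow> r12 r \<circ> r23 r \<circ> r12 r = r23 r \<circ> r12 r \<circ> r23 r"

definition is_aut :: "('a \<Rightarrow> 'a \<Rightarrow> 'a) \<Rightarrow> ('a \<Rightarrow> 'a \<Rightarrow> 'a) \<Rightarrow> ('a \<Rightarrow> 'a) \<Rightarrow> bool" where
  "is_aut add mult f \<longleftrightarrow> bij f \<and> (\<forall>a b. f (add a b) = add (f a) (f b)) \<and>
     (\<forall>a b. f (mult a b) = mult (f a) (f b))"

text \<open>delta-cocycle; here delta a u stands for u^a.\<close>
definition delta_cocycle ::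
  "('a \<Rightarrow> 'a \<Rightarrow> 'a) \<Rightarrow> ('b \<Rightarrow> 'b \<Rightarrow> 'b) \<Rightarrow> ('a \<Rightarrow> 'b \<Rightarrow> 'b) \<Rightarrow> ('a \<Rightarrow> 'a \<Rightarrow> 'b) \<Rightarrow> bool" where
  "delta_cocycle addS addT delta bb \<longleftrightarrow>
     (\<forall>a b c u v.
        addT (addT (addT (bb (addS a b) c) (delta c (bb a b))) (delta c (delta b u))) (delta c v) =
        addT (addT (addT (bb a (addS b c)) (delta (addS b c) u)) (bb b c)) (delta c v))"

definition asym_add ::
  "('a \<Rightarrow> 'a \<Rightarrow> 'a) \<Rightarrow> ('b \<Rightarrow> 'b \<Rightarrow> 'b) \<Rightarrow> ('a \<Rightarrow> 'b \<Rightarrow> 'b) \<Rightarrow> ('a \<Rightarrow> 'a \<Rightarrow> 'b)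
   \<Rightarrow> 'a \<times> 'b \<Rightarrow> 'a \<times> 'b \<Rightarrow> 'a \<times> 'b" where
  "asym_add addS addT delta bb = (\<lambda>(a, u) (b, v). (addS a b, addT (addT (bb a b) (delta b u)) v))"

definition asym_mult ::
  "('a \<Rightarrow> 'a \<Rightarrow> 'a) \<Rightarrow> ('b \<Rightarrow> 'b \<Rightarrow> 'b) \<Rightarrow> ('b \<Rightarrow> 'a \<Rightarrow> 'a)
   \<Rightarrow> 'a \<times> 'b \<Rightarrow> 'a \<times> 'b \<Rightarrow> 'a \<times> 'b" where
  "asym_mult multS multT sigma = (\<lambda>(a, u) (b, v). (multS a (sigma u b), multT u v))"

definition asym_inv :: "('a \<Rightarrow> 'a) \<Rightarrow> ('b \<Rightarrow> 'b) \<Rightarrow> ('b \<Rightarrow> 'a \<Rightarrow> 'a) \<Rightarrow> 'a \<times> 'b \<Rightarrow> 'a \<times> 'b" where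
  "asym_inv invS invT sigma = (\<lambda>(a, u). (sigma (invT u) (invS a), invT u))"

end

theory Submission
  imports Defs
begin

(* In a left semi-brace rho_b(a) = lambda_a(b)^-1 a b, so the braid relation of r_S reduces to
   its third component, which reads 1 + y(1+z) = 1 + lambda_y(z)(1 + rho_z(y)).  Specialising
   y or z to 1 shows that r_S is a solution iff 1 + b(1+c) = 1 + bc for all b, c.
   In the asymmetric product B the compatibility condition together with (2) makes 1 a left
   identity of (T,+), so that (1,1) + (c,w) = (1+c, w); the criterion for B then reduces to
   the criterion for S. *)

locale semi_brace =
  fixes add :: "'a \<Rightarrow> 'a \<Rightarrow> 'a" (infixl \<open>\<oplus>\<close> 65)
    and mult :: "'a \<Rightarrow> 'a \<Rightarrow> 'a" (infixl \<open>\<cdot>\<close> 70)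
    and one :: 'a (\<open>\<one>\<close>)
    and iv :: "'a \<Rightarrow> 'a" (\<open>_\<^sup>-\<^sup>1\<close> [1000] 999)
  assumes left_semi_brace: "left_semi_brace (\<oplus>) (\<cdot>) \<one> iv"
begin

abbreviation lambda :: "'a \<Rightarrow> 'a \<Rightarrow> 'a" (\<open>\<lambda>\<^bsub>_\<^esub>\<close> [0] 1000)
  where "\<lambda>\<^bsub>a\<^esub> \<equiv> lam (\<oplus>) (\<cdot>) iv a"

abbreviation rho_map :: "'a \<Rightarrow> 'a \<Rightarrow> 'a" (\<open>\<rho>\<^bsub>_\<^esub>\<close> [0] 1000)
  where "\<rho>\<^bsub>b\<^esub> \<equiv> rho (\<oplus>) (\<cdot>) iv b"

lemma add_assoc: "a \<oplus> b \<oplus> c = a \<oplus> (b \<oplus> c)"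
  using left_semi_brace by (simp add: left_semi_brace_def semigroup_op_def)

sublocale mult: group "(\<cdot>)" \<one> iv
  using left_semi_brace by unfold_locales (simp_all add: left_semi_brace_def group_ops_def)

lemma mult_inv_cancel [simp]: "a \<cdot> (a\<^sup>-\<^sup>1 \<cdot> b) = b"
  by (simp flip: mult.assoc add: mult.group_left_neutral)

lemma inv_eq_iff [simp]: "a\<^sup>-\<^sup>1 = b\<^sup>-\<^sup>1 \<longleftrightarrow> a = b"
  by (metis mult.inverse_inverse)

lemma distrib: "a \<cdot> (b \<oplus> c) = a \<cdot> b \<oplus> \<lambda>\<^bsub>a\<^esub> c"
  using left_semi_brace unfolding left_semi_brace_def lam_def by blast

lemma add_lam: "x \<oplus> \<lambda>\<^bsub>a\<^esub> c = a \<cdot> (a\<^sup>-\<^sup>1 \<cdot> x \<oplus> c)"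
  by (simp add: distrib)

lemma lam_one: "\<lambda>\<^bsub>\<one>\<^esub> b = \<one> \<oplus> b"
  by (simp add: lam_def mult.group_left_neutral)

lemma add_one_absorb: "x \<oplus> (\<one> \<oplus> y) = x \<oplus> y"
  using distrib[of \<one> x y] by (simp add: lam_one mult.group_left_neutral)

lemma one_add_lam: "\<one> \<oplus> \<lambda>\<^bsub>a\<^esub> b = \<lambda>\<^bsub>a\<^esub> b"
  using distrib[of a "a\<^sup>-\<^sup>1" b] by (simp add: lam_def)

lemma lam_one_add: "\<lambda>\<^bsub>a\<^esub> (\<one> \<oplus> b) = \<lambda>\<^bsub>a\<^esub> b"
  by (simp add: lam_def add_one_absorb)

lemma lam_add: "\<lambda>\<^bsub>a\<^esub> (b \<oplus> c) = \<lambda>\<^bsub>a\<^esub> b \<oplus> \<lambda>\<^bsub>a\<^esub> c"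
  using distrib[of a "a\<^sup>-\<^sup>1 \<oplus> b" c] by (simp add: lam_def add_assoc)

lemma lam_mult: "\<lambda>\<^bsub>a \<cdot> b\<^esub> c = \<lambda>\<^bsub>a\<^esub> (\<lambda>\<^bsub>b\<^esub> c)"
proof -
  have "\<lambda>\<^bsub>a\<^esub> (\<lambda>\<^bsub>b\<^esub> c) = a \<cdot> (b \<cdot> (b\<^sup>-\<^sup>1 \<cdot> a\<^sup>-\<^sup>1 \<oplus> c))"
    by (simp only: lam_def[where a=a] add_lam)
  then show ?thesis
    by (simp only: lam_def mult.assoc mult.inverse_distrib_swap)
qed

lemma lam_inv_lam: "\<lambda>\<^bsub>a\<^sup>-\<^sup>1\<^esub> (\<lambda>\<^bsub>a\<^esub> b) = \<one> \<oplus> b"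
  by (simp flip: lam_mult add: lam_one)

lemma one_add_one: "\<one> \<oplus> \<one> = \<one>"
proof -
  define e where "e = \<one> \<oplus> \<one>"
  have "e \<oplus> e = e"
    unfolding e_def by (simp add: add_one_absorb add_assoc)
  then have "\<lambda>\<^bsub>e\<^sup>-\<^sup>1\<^esub> e = \<one>"
    by (simp add: lam_def)
  then show ?thesis
    using one_add_lam[of "e\<^sup>-\<^sup>1" e] by simp
qed

lemma add_left_eq_iff: "x \<oplus> s = x \<oplus> t \<longleftrightarrow> \<one> \<oplus> s = \<one> \<oplus> t"
proof
  assume "x \<oplus> s = x \<oplus> t"
  then have "\<lambda>\<^bsub>x\<^sup>-\<^sup>1\<^esub> s = \<lambda>\<^bsub>x\<^sup>-\<^sup>1\<^esub> t"
    by (simp add: lam_def)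
  then show "\<one> \<oplus> s = \<one> \<oplus> t"
    by (metis lam_inv_lam mult.inverse_inverse)
next
  assume "\<one> \<oplus> s = \<one> \<oplus> t"
  then show "x \<oplus> s = x \<oplus> t"
    by (metis add_one_absorb)
qed

lemma lam_eq_iff: "\<lambda>\<^bsub>a\<^esub> s = \<lambda>\<^bsub>a\<^esub> t \<longleftrightarrow> \<one> \<oplus> s = \<one> \<oplus> t"
  unfolding lam_def mult.left_cancel by (rule add_left_eq_iff)

lemma rho_eq: "\<rho>\<^bsub>b\<^esub> a = (\<lambda>\<^bsub>a\<^esub> b)\<^sup>-\<^sup>1 \<cdot> a \<cdot> b"
  by (simp add: rho_def lam_def mult.inverse_distrib_swap mult.assoc)

lemma lam_mult_rho: "\<lambda>\<^bsub>a\<^esub> b \<cdot> \<rho>\<^bsub>b\<^esub> a = a \<cdot> b"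
  by (simp add: rho_eq mult.assoc)

lemma lam_mult_rho_assoc: "\<lambda>\<^bsub>a\<^esub> b \<cdot> (\<rho>\<^bsub>b\<^esub> a \<cdot> c) = a \<cdot> (b \<cdot> c)"
  by (simp flip: mult.assoc add: lam_mult_rho)

lemma lam_mult_lam_rho: "\<lambda>\<^bsub>x\<^esub> y \<cdot> \<lambda>\<^bsub>\<rho>\<^bsub>y\<^esub> x\<^esub> z = \<lambda>\<^bsub>x\<^esub> (y \<cdot> (\<one> \<oplus> z))"
proof -
  define w where "w = \<rho>\<^bsub>y\<^esub> x"
  have w_inv: "w\<^sup>-\<^sup>1 = (x \<cdot> y)\<^sup>-\<^sup>1 \<cdot> \<lambda>\<^bsub>x\<^esub> y"
    by (simp add: w_def rho_eq mult.inverse_distrib_swap mult.assoc)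
  have "\<lambda>\<^bsub>x\<^esub> y \<cdot> \<lambda>\<^bsub>w\<^esub> z = (\<lambda>\<^bsub>x\<^esub> y \<cdot> w) \<cdot> (w\<^sup>-\<^sup>1 \<oplus> z)"
    by (simp add: lam_def mult.assoc)
  also have "\<dots> = (x \<cdot> y) \<cdot> ((x \<cdot> y)\<^sup>-\<^sup>1 \<cdot> \<lambda>\<^bsub>x\<^esub> y \<oplus> z)"
    by (simp add: w_def lam_mult_rho w_inv[unfolded w_def])
  also have "\<dots> = \<lambda>\<^bsub>x\<^esub> y \<oplus> \<lambda>\<^bsub>x\<^esub> (\<lambda>\<^bsub>y\<^esub> z)"
    by (simp add: distrib lam_mult)
  also have "\<dots> = \<lambda>\<^bsub>x\<^esub> (y \<cdot> (\<one> \<oplus> z))"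
    by (simp add: distrib lam_add)
  finally show ?thesis
    by (simp add: w_def)
qed

lemma rho_rho: "\<rho>\<^bsub>z\<^esub> (\<rho>\<^bsub>y\<^esub> x) = (\<lambda>\<^bsub>x\<^esub> (y \<cdot> (\<one> \<oplus> z)))\<^sup>-\<^sup>1 \<cdot> (x \<cdot> y \<cdot> z)"
proof -
  have "\<rho>\<^bsub>z\<^esub> (\<rho>\<^bsub>y\<^esub> x) = (\<lambda>\<^bsub>x\<^esub> y \<cdot> \<lambda>\<^bsub>\<rho>\<^bsub>y\<^esub> x\<^esub> z)\<^sup>-\<^sup>1 \<cdot> (x \<cdot> y \<cdot> z)"
    by (simp add: rho_eq[of z] rho_eq[of y] mult.inverse_distrib_swap mult.assoc)
  then show ?thesis
    by (simp add: lam_mult_lam_rho)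
qed

lemma rho_braid_iff:
  "\<rho>\<^bsub>z\<^esub> (\<rho>\<^bsub>y\<^esub> x) = \<rho>\<^bsub>\<rho>\<^bsub>z\<^esub> y\<^esub> (\<rho>\<^bsub>\<lambda>\<^bsub>y\<^esub> z\<^esub> x)
   \<longleftrightarrow> \<one> \<oplus> y \<cdot> (\<one> \<oplus> z) = \<one> \<oplus> \<lambda>\<^bsub>y\<^esub> z \<cdot> (\<one> \<oplus> \<rho>\<^bsub>z\<^esub> y)"
proof -
  have "x \<cdot> \<lambda>\<^bsub>y\<^esub> z \<cdot> \<rho>\<^bsub>z\<^esub> y = x \<cdot> y \<cdot> z"
    by (simp add: mult.assoc lam_mult_rho)
  then show ?thesis
    by (simp add: rho_rho mult.right_cancel lam_eq_iff)
qed

lemma is_solution_iff_rho_braid: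
  "is_solution (assoc_map (\<oplus>) (\<cdot>) iv) \<longleftrightarrow>
   (\<forall>x y z. \<rho>\<^bsub>z\<^esub> (\<rho>\<^bsub>y\<^esub> x) = \<rho>\<^bsub>\<rho>\<^bsub>z\<^esub> y\<^esub> (\<rho>\<^bsub>\<lambda>\<^bsub>y\<^esub> z\<^esub> x))"
proof -
  have first: "\<lambda>\<^bsub>\<lambda>\<^bsub>x\<^esub> y\<^esub> (\<lambda>\<^bsub>\<rho>\<^bsub>y\<^esub> x\<^esub> z) = \<lambda>\<^bsub>x\<^esub> (\<lambda>\<^bsub>y\<^esub> z)" for x y z
    by (simp flip: lam_mult add: lam_mult_rho)
  have middle: "\<rho>\<^bsub>\<lambda>\<^bsub>\<rho>\<^bsub>y\<^esub> x\<^esub> z\<^esub> (\<lambda>\<^bsub>x\<^esub> y) = \<lambda>\<^bsub>\<rho>\<^bsub>\<lambda>\<^bsub>y\<^esub> z\<^esub> x\<^esub> (\<rho>\<^bsub>z\<^esub> y)"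
    if "\<rho>\<^bsub>z\<^esub> (\<rho>\<^bsub>y\<^esub> x) = \<rho>\<^bsub>\<rho>\<^bsub>z\<^esub> y\<^esub> (\<rho>\<^bsub>\<lambda>\<^bsub>y\<^esub> z\<^esub> x)" for x y z
  proof -
    have "\<lambda>\<^bsub>\<lambda>\<^bsub>x\<^esub> y\<^esub> (\<lambda>\<^bsub>\<rho>\<^bsub>y\<^esub> x\<^esub> z) \<cdot> \<rho>\<^bsub>\<lambda>\<^bsub>\<rho>\<^bsub>y\<^esub> x\<^esub> z\<^esub> (\<lambda>\<^bsub>x\<^esub> y) \<cdot> \<rho>\<^bsub>z\<^esub> (\<rho>\<^bsub>y\<^esub> x)
        = x \<cdot> y \<cdot> z"
      by (simp add: lam_mult_rho lam_mult_rho_assoc mult.assoc)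
    moreover have "\<lambda>\<^bsub>x\<^esub> (\<lambda>\<^bsub>y\<^esub> z) \<cdot> \<lambda>\<^bsub>\<rho>\<^bsub>\<lambda>\<^bsub>y\<^esub> z\<^esub> x\<^esub> (\<rho>\<^bsub>z\<^esub> y) \<cdot> \<rho>\<^bsub>\<rho>\<^bsub>z\<^esub> y\<^esub> (\<rho>\<^bsub>\<lambda>\<^bsub>y\<^esub> z\<^esub> x)
        = x \<cdot> y \<cdot> z"
      by (simp add: lam_mult_rho lam_mult_rho_assoc mult.assoc)
    ultimately show ?thesis
      using that by (metis first mult.left_cancel mult.right_cancel)
  qed
  show ?thesis
    by (auto simp: is_solution_def fun_eq_iff r12_def r23_def assoc_map_def first middle)
qed

lemma lam_rho_one_one: "\<lambda>\<^bsub>\<rho>\<^bsub>\<one>\<^esub> y\<^esub> \<one> = \<one>"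
proof -
  define L where "L = \<lambda>\<^bsub>y\<^esub> \<one>"
  have "L \<oplus> L = L"
    by (simp add: L_def one_add_one flip: lam_add)
  have "\<lambda>\<^bsub>\<rho>\<^bsub>\<one>\<^esub> y\<^esub> \<one> = \<lambda>\<^bsub>L\<^sup>-\<^sup>1\<^esub> L"
    by (simp add: L_def rho_eq lam_mult)
  also have "\<dots> = \<one>"
    by (simp add: lam_def \<open>L \<oplus> L = L\<close>)
  finally show ?thesis .
qed

lemma lam_one_eq_one_iff: "\<lambda>\<^bsub>g\<^esub> \<one> = \<one> \<longleftrightarrow> g \<oplus> \<one> = g"
proof
  assume "\<lambda>\<^bsub>g\<^esub> \<one> = \<one>"
  then have "\<lambda>\<^bsub>g\<^sup>-\<^sup>1\<^esub> \<one> = \<one>"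
    using lam_inv_lam[of g \<one>] by (simp add: one_add_one)
  then show "g \<oplus> \<one> = g"
    by (metis lam_def mult.inverse_inverse mult.right_neutral mult_inv_cancel)
next
  assume "g \<oplus> \<one> = g"
  then have "\<lambda>\<^bsub>g\<^sup>-\<^sup>1\<^esub> \<one> = \<one>"
    by (simp add: lam_def)
  then show "\<lambda>\<^bsub>g\<^esub> \<one> = \<one>"
    using lam_inv_lam[of "g\<^sup>-\<^sup>1" \<one>] by (simp add: one_add_one)
qed

lemma idempotent_left_neutral:
  assumes "\<And>t. \<one> \<oplus> t = t" and "e \<oplus> e = e"
  shows "e \<oplus> y = y"
  using add_left_eq_iff[of e "e \<oplus> y" y] assms by (simp flip: add_assoc)

text \<open>The hypothesis \<open>braid\<close> is the third component of the braid relation,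
  in the form given by \<open>rho_braid_iff\<close>.\<close>

context
  assumes braid: "\<And>y z. \<one> \<oplus> y \<cdot> (\<one> \<oplus> z) = \<one> \<oplus> \<lambda>\<^bsub>y\<^esub> z \<cdot> (\<one> \<oplus> \<rho>\<^bsub>z\<^esub> y)"
begin

lemma one_add_rho_one: "\<one> \<oplus> \<rho>\<^bsub>z\<^esub> \<one> = \<one>"
proof -
  define w where "w = \<one> \<oplus> z"
  have "w \<cdot> (\<one> \<oplus> \<rho>\<^bsub>z\<^esub> \<one>) = \<one> \<oplus> w \<cdot> (\<one> \<oplus> \<rho>\<^bsub>z\<^esub> \<one>)"
    by (simp add: distrib w_def one_add_one flip: add_assoc)
  also have "\<dots> = w \<cdot> \<one>"
    using braid[of \<one> z] by (simp add: w_def lam_one add_one_absorb mult.group_left_neutral)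
  finally show ?thesis
    by (simp only: mult.left_cancel)
qed

lemma absorbed_lam_one:
  assumes "\<one> \<oplus> e = \<one>"
  shows "\<lambda>\<^bsub>e\<^esub> \<one> = \<one>"
proof -
  define L g where "L = \<lambda>\<^bsub>e\<^esub> \<one>" and "g = \<rho>\<^bsub>\<one>\<^esub> e"
  have e: "e = L \<cdot> g"
    using lam_mult_rho[of e \<one>] by (simp add: L_def g_def)
  have "L \<cdot> (\<one> \<oplus> g) = \<one>"
    using braid[of e \<one>] assms
    by (simp add: L_def g_def one_add_one distrib one_add_lam flip: add_assoc)
  then have L_inv: "L\<^sup>-\<^sup>1 = \<one> \<oplus> g"
    by (metis mult.inverse_unique mult.inverse_inverse)
  have g_fixed: "\<lambda>\<^bsub>g\<^esub> \<one> = \<one>"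
    by (simp add: g_def lam_rho_one_one)
  then have "\<lambda>\<^bsub>L\<^esub> \<one> = \<lambda>\<^bsub>L \<cdot> g\<^esub> \<one>"
    by (simp add: lam_mult)
  also have "\<dots> = L"
    by (metis L_def e)
  finally have "\<lambda>\<^bsub>L\<^esub> \<one> = L" .
  then have "L\<^sup>-\<^sup>1 \<oplus> \<one> = \<one>"
    by (metis lam_def mult.left_cancel mult.right_neutral)
  moreover have "g \<oplus> \<one> = g"
    using g_fixed by (simp add: lam_one_eq_one_iff)
  ultimately have "L\<^sup>-\<^sup>1 = \<one>"
    by (simp add: L_inv add_assoc)
  then show ?thesis
    by (metis L_def mult.inverse_neutral mult.inverse_inverse)
qed

lemma absorbed_mult_right_of_lam_one:
  assumes "\<lambda>\<^bsub>g\<^esub> \<one> = \<one>" and "\<one> \<oplus> e = \<one>"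
  shows "\<one> \<oplus> g \<cdot> e = \<one> \<oplus> g"
proof -
  have "\<lambda>\<^bsub>g\<^esub> e = \<one>"
    using assms by (metis lam_one_add)
  then show ?thesis
    using braid[of g e] assms(2) by (simp add: rho_eq add_one_absorb mult.group_left_neutral)
qed

lemma absorbed_mult_right:
  assumes "\<one> \<oplus> e = \<one>"
  shows "\<one> \<oplus> b \<cdot> e = \<one> \<oplus> b"
proof -
  define L g where "L = \<lambda>\<^bsub>b\<^esub> \<one>" and "g = \<rho>\<^bsub>\<one>\<^esub> b"
  have "\<lambda>\<^bsub>b \<cdot> e\<^esub> \<one> = L" and "\<rho>\<^bsub>\<one>\<^esub> (b \<cdot> e) = g \<cdot> e"
    using absorbed_lam_one[OF assms] by (simp_all add: L_def g_def lam_mult rho_eq mult.assoc)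
  then have "\<one> \<oplus> b \<cdot> e = \<one> \<oplus> L \<cdot> (\<one> \<oplus> g \<cdot> e)"
    using braid[of "b \<cdot> e" \<one>] by (simp add: one_add_one)
  also have "\<dots> = \<one> \<oplus> L \<cdot> (\<one> \<oplus> g)"
    using absorbed_mult_right_of_lam_one[OF lam_rho_one_one assms] by (simp add: g_def)
  also have "\<dots> = \<one> \<oplus> b"
    using braid[of b \<one>] by (simp add: L_def g_def one_add_one)
  finally show ?thesis .
qed

lemma one_add_mult_one_add: "\<one> \<oplus> b \<cdot> (\<one> \<oplus> c) = \<one> \<oplus> b \<cdot> c"
proof -
  have "c = (\<one> \<oplus> c) \<cdot> \<rho>\<^bsub>c\<^esub> \<one>"
    using lam_mult_rho[of \<one> c] by (simp add: lam_one mult.group_left_neutral)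
  then have "b \<cdot> c = b \<cdot> (\<one> \<oplus> c) \<cdot> \<rho>\<^bsub>c\<^esub> \<one>"
    by (metis mult.assoc)
  then show ?thesis
    by (simp add: absorbed_mult_right one_add_rho_one)
qed

end

theorem is_solution_iff:
  "is_solution (assoc_map (\<oplus>) (\<cdot>) iv) \<longleftrightarrow> (\<forall>b c. \<one> \<oplus> b \<cdot> (\<one> \<oplus> c) = \<one> \<oplus> b \<cdot> c)"
proof -
  have "is_solution (assoc_map (\<oplus>) (\<cdot>) iv) \<longleftrightarrow>
        (\<forall>y z. \<one> \<oplus> y \<cdot> (\<one> \<oplus> z) = \<one> \<oplus> \<lambda>\<^bsub>y\<^esub> z \<cdot> (\<one> \<oplus> \<rho>\<^bsub>z\<^esub> y))"
    by (simp add: is_solution_iff_rho_braid rho_braid_iff)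
  also have "\<dots> \<longleftrightarrow> (\<forall>b c. \<one> \<oplus> b \<cdot> (\<one> \<oplus> c) = \<one> \<oplus> b \<cdot> c)"
  proof
    assume "\<forall>y z. \<one> \<oplus> y \<cdot> (\<one> \<oplus> z) = \<one> \<oplus> \<lambda>\<^bsub>y\<^esub> z \<cdot> (\<one> \<oplus> \<rho>\<^bsub>z\<^esub> y)"
    then show "\<forall>b c. \<one> \<oplus> b \<cdot> (\<one> \<oplus> c) = \<one> \<oplus> b \<cdot> c"
      using one_add_mult_one_add by blast
  next
    assume criterion: "\<forall>b c. \<one> \<oplus> b \<cdot> (\<one> \<oplus> c) = \<one> \<oplus> b \<cdot> c"
    show "\<forall>y z. \<one> \<oplus> y \<cdot> (\<one> \<oplus> z) = \<one> \<oplus> \<lambda>\<^bsub>y\<^esub> z \<cdot> (\<one> \<oplus> \<rho>\<^bsub>z\<^esub> y)"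
      by (simp add: criterion lam_mult_rho)
  qed
  finally show ?thesis .
qed

end

lemma asym_add_Pair [simp]:
  "asym_add addS addT delta bb (a, u) (b, v) = (addS a b, addT (addT (bb a b) (delta b u)) v)"
  by (simp add: asym_add_def)

lemma asym_mult_Pair [simp]:
  "asym_mult multS multT sigma (a, u) (b, v) = (multS a (sigma u b), multT u v)"
  by (simp add: asym_mult_def)

lemma asym_inv_Pair [simp]:
  "asym_inv invS invT sigma (a, u) = (sigma (invT u) (invS a), invT u)"
  by (simp add: asym_inv_def)

locale asym_product =
  S: semi_brace addS multS oneS invS + T: semi_brace addT multT oneT invT
  for addS (infixl \<open>\<oplus>\<^sub>S\<close> 65) and multS (infixl \<open>\<cdot>\<^sub>S\<close> 70) and oneS (\<open>\<one>\<^sub>S\<close>) and invS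
    and addT (infixl \<open>\<oplus>\<^sub>T\<close> 65) and multT (infixl \<open>\<cdot>\<^sub>T\<close> 70) and oneT (\<open>\<one>\<^sub>T\<close>) and invT +
  fixes sigma :: "'b \<Rightarrow> 'a \<Rightarrow> 'a" and delta :: "'a \<Rightarrow> 'b \<Rightarrow> 'b" and bb :: "'a \<Rightarrow> 'a \<Rightarrow> 'b"
  assumes sigma_aut: "\<forall>u. is_aut (\<oplus>\<^sub>S) (\<cdot>\<^sub>S) (sigma u)"
    and sigma_hom: "\<forall>u v. sigma (u \<cdot>\<^sub>T v) = sigma u \<circ> sigma v"
    and delta_end: "\<forall>a u v. delta a (u \<oplus>\<^sub>T v) = delta a u \<oplus>\<^sub>T delta a v"
    and cocycle: "delta_cocycle (\<oplus>\<^sub>S) (\<oplus>\<^sub>T) delta bb"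
    and compat: "\<forall>a b c u v.
       bb (a \<cdot>\<^sub>S sigma u b) (lam (\<oplus>\<^sub>S) (\<cdot>\<^sub>S) invS a (sigma u c))
         \<oplus>\<^sub>T delta (lam (\<oplus>\<^sub>S) (\<cdot>\<^sub>S) invS a (sigma u c)) (u \<cdot>\<^sub>T v)
         \<oplus>\<^sub>T u \<cdot>\<^sub>T (bb (sigma (invT u) (invS a)) c \<oplus>\<^sub>T delta c (invT u))
       = u \<cdot>\<^sub>T (bb b c \<oplus>\<^sub>T delta c v)"
begin

abbreviation addB :: "'a \<times> 'b \<Rightarrow> 'a \<times> 'b \<Rightarrow> 'a \<times> 'b" where "addB \<equiv> asym_add (\<oplus>\<^sub>S) (\<oplus>\<^sub>T) delta bb"
abbreviation multB :: "'a \<times> 'b \<Rightarrow> 'a \<times> 'b \<Rightarrow> 'a \<times> 'b" where "multB \<equiv> asym_mult (\<cdot>\<^sub>S) (\<cdot>\<^sub>T) sigma"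
abbreviation invB :: "'a \<times> 'b \<Rightarrow> 'a \<times> 'b" where "invB \<equiv> asym_inv invS invT sigma"

lemma sigma_add: "sigma u (a \<oplus>\<^sub>S b) = sigma u a \<oplus>\<^sub>S sigma u b"
  using sigma_aut by (simp add: is_aut_def)

lemma sigma_mult: "sigma u (a \<cdot>\<^sub>S b) = sigma u a \<cdot>\<^sub>S sigma u b"
  using sigma_aut by (simp add: is_aut_def)

lemma sigma_comp: "sigma (u \<cdot>\<^sub>T v) a = sigma u (sigma v a)"
  using sigma_hom by simp

lemma sigma_one_left [simp]: "sigma \<one>\<^sub>T a = a"
proof -
  have "inj (sigma \<one>\<^sub>T)"
    using sigma_aut by (simp add: is_aut_def bij_is_inj)
  moreover have "sigma \<one>\<^sub>T (sigma \<one>\<^sub>T a) = sigma \<one>\<^sub>T a"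
    by (simp flip: sigma_comp add: T.mult.group_left_neutral)
  ultimately show ?thesis
    by (simp add: inj_eq)
qed

lemma sigma_inv_cancel [simp]: "sigma u (sigma (invT u) a) = a"
  by (simp flip: sigma_comp)

lemma sigma_one_right [simp]: "sigma u \<one>\<^sub>S = \<one>\<^sub>S"
  using sigma_mult[of u "\<one>\<^sub>S" "\<one>\<^sub>S"] by (metis S.mult.left_cancel S.mult.right_neutral)

lemma semigroup_asym_add: "semigroup_op addB"
  unfolding semigroup_op_def
proof (intro allI)
  fix X Y Z :: "'a \<times> 'b"
  obtain a u b v c w where XYZ: "X = (a, u)" "Y = (b, v)" "Z = (c, w)"
    by (metis prod.exhaust)
  have "bb (a \<oplus>\<^sub>S b) c \<oplus>\<^sub>T delta c (bb a b) \<oplus>\<^sub>T delta c (delta b u) \<oplus>\<^sub>T delta c v \<oplus>\<^sub>T w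
      = bb a (b \<oplus>\<^sub>S c) \<oplus>\<^sub>T delta (b \<oplus>\<^sub>S c) u \<oplus>\<^sub>T bb b c \<oplus>\<^sub>T delta c v \<oplus>\<^sub>T w"
    using cocycle by (simp add: delta_cocycle_def)
  then show "addB (addB X Y) Z = addB X (addB Y Z)"
    by (simp add: XYZ S.add_assoc T.add_assoc delta_end)
qed

lemma group_asym_mult: "group_ops multB (\<one>\<^sub>S, \<one>\<^sub>T) invB"
  unfolding group_ops_def
proof (intro conjI allI)
  fix X Y Z :: "'a \<times> 'b"
  obtain a u b v c w where XYZ: "X = (a, u)" "Y = (b, v)" "Z = (c, w)"
    by (metis prod.exhaust)
  show "multB (multB X Y) Z = multB X (multB Y Z)"
    by (simp add: XYZ S.mult.assoc T.mult.assoc sigma_comp sigma_mult)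
next
  fix X :: "'a \<times> 'b"
  obtain a u where X: "X = (a, u)"
    by (metis prod.exhaust)
  show "multB (\<one>\<^sub>S, \<one>\<^sub>T) X = X" and "multB X (\<one>\<^sub>S, \<one>\<^sub>T) = X"
    by (simp_all add: X S.mult.group_left_neutral T.mult.group_left_neutral)
  show "multB (invB X) X = (\<one>\<^sub>S, \<one>\<^sub>T)"
    by (simp add: X flip: sigma_mult)
  show "multB X (invB X) = (\<one>\<^sub>S, \<one>\<^sub>T)"
    by (simp add: X)
qed

lemma asym_distrib: "multB X (addB Y Z) = addB (multB X Y) (multB X (addB (invB X) Z))"
proof -
  obtain a u b v c w where XYZ: "X = (a, u)" "Y = (b, v)" "Z = (c, w)"
    by (metis prod.exhaust)
  let ?l = "lam (\<oplus>\<^sub>S) (\<cdot>\<^sub>S) invS a (sigma u c)"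
  let ?a' = "sigma (invT u) (invS a)"
  have "a \<cdot>\<^sub>S sigma u (b \<oplus>\<^sub>S c) = a \<cdot>\<^sub>S sigma u b \<oplus>\<^sub>S ?l"
    by (simp add: sigma_add S.distrib)
  moreover have "a \<cdot>\<^sub>S sigma u (?a' \<oplus>\<^sub>S c) = ?l"
    by (simp add: sigma_add lam_def)
  moreover have "u \<cdot>\<^sub>T (bb b c \<oplus>\<^sub>T delta c v \<oplus>\<^sub>T w)
      = bb (a \<cdot>\<^sub>S sigma u b) ?l \<oplus>\<^sub>T delta ?l (u \<cdot>\<^sub>T v)
          \<oplus>\<^sub>T u \<cdot>\<^sub>T (bb ?a' c \<oplus>\<^sub>T delta c (invT u) \<oplus>\<^sub>T w)"
  proof -
    have "bb (a \<cdot>\<^sub>S sigma u b) ?l \<oplus>\<^sub>T delta ?l (u \<cdot>\<^sub>T v)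
          \<oplus>\<^sub>T u \<cdot>\<^sub>T (bb ?a' c \<oplus>\<^sub>T delta c (invT u)) = u \<cdot>\<^sub>T (bb b c \<oplus>\<^sub>T delta c v)"
      using compat by blast
    then have "u \<cdot>\<^sub>T (bb b c \<oplus>\<^sub>T delta c v \<oplus>\<^sub>T w) = bb (a \<cdot>\<^sub>S sigma u b) ?l \<oplus>\<^sub>T delta ?l (u \<cdot>\<^sub>T v)
          \<oplus>\<^sub>T u \<cdot>\<^sub>T (bb ?a' c \<oplus>\<^sub>T delta c (invT u)) \<oplus>\<^sub>T lam (\<oplus>\<^sub>T) (\<cdot>\<^sub>T) invT u w"
      by (simp only: T.distrib[of u _ w])
    then show ?thesis
      by (simp only: T.distrib T.add_assoc T.lam_add)
  qed
  ultimately show ?thesis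
    by (simp add: XYZ)
qed

theorem left_semi_brace_asym: "left_semi_brace addB multB (\<one>\<^sub>S, \<one>\<^sub>T) invB"
  unfolding left_semi_brace_def using semigroup_asym_add group_asym_mult asym_distrib by blast

context
  assumes bb_one_left: "\<forall>a u. bb \<one>\<^sub>S a \<oplus>\<^sub>T u = \<one>\<^sub>T \<oplus>\<^sub>T u"
begin

lemma T_one_add [simp]: "\<one>\<^sub>T \<oplus>\<^sub>T t = t"
proof -
  define Y where "Y = bb \<one>\<^sub>S \<one>\<^sub>S \<oplus>\<^sub>T delta \<one>\<^sub>S \<one>\<^sub>T"
  \<comment> \<open>\<open>compat\<close> at \<open>a = b = c = \<one>\<^sub>S\<close> puts every \<open>u \<cdot>\<^sub>T Y\<close>, hence every element of \<open>T\<close>, into \<open>\<one>\<^sub>T \<oplus>\<^sub>T T\<close>.\<close>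
  have "\<exists>W. u \<cdot>\<^sub>T Y = \<one>\<^sub>T \<oplus>\<^sub>T W" for u
    using compat[rule_format, where a="\<one>\<^sub>S" and b="\<one>\<^sub>S" and c="\<one>\<^sub>S" and u=u and v="\<one>\<^sub>T"] bb_one_left
    by (simp add: Y_def T.add_assoc S.mult.group_left_neutral) metis
  then have "\<one>\<^sub>T \<oplus>\<^sub>T u \<cdot>\<^sub>T Y = u \<cdot>\<^sub>T Y" for u
    by (metis T.add_one_absorb)
  then show ?thesis
    by (metis T.mult.assoc T.mult.left_inverse T.mult.right_neutral)
qed

lemma bb_one_add [simp]: "bb \<one>\<^sub>S a \<oplus>\<^sub>T u = u"
  using bb_one_left by simp

lemma delta_one_add [simp]: "delta a \<one>\<^sub>T \<oplus>\<^sub>T u = u"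
proof (rule T.idempotent_left_neutral)
  show "delta a \<one>\<^sub>T \<oplus>\<^sub>T delta a \<one>\<^sub>T = delta a \<one>\<^sub>T"
    using delta_end by (metis T_one_add)
qed simp

lemma asym_one_add: "addB (\<one>\<^sub>S, \<one>\<^sub>T) (c, w) = (\<one>\<^sub>S \<oplus>\<^sub>S c, w)"
  by (simp add: T.add_assoc)

theorem is_solution_asym:
  assumes "is_solution (assoc_map (\<oplus>\<^sub>S) (\<cdot>\<^sub>S) invS)"
  shows "is_solution (assoc_map addB multB invB)"
proof -
  interpret B: semi_brace addB multB "(\<one>\<^sub>S, \<one>\<^sub>T)" invB
    by (rule semi_brace.intro) (rule left_semi_brace_asym)
  have S_criterion: "\<one>\<^sub>S \<oplus>\<^sub>S b \<cdot>\<^sub>S (\<one>\<^sub>S \<oplus>\<^sub>S c) = \<one>\<^sub>S \<oplus>\<^sub>S b \<cdot>\<^sub>S c" for b c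
    using assms S.is_solution_iff by blast
  show ?thesis
    unfolding B.is_solution_iff
  proof (intro allI)
    fix Y Z :: "'a \<times> 'b"
    obtain b v c w where "Y = (b, v)" "Z = (c, w)"
      by (metis prod.exhaust)
    then show "addB (\<one>\<^sub>S, \<one>\<^sub>T) (multB Y (addB (\<one>\<^sub>S, \<one>\<^sub>T) Z)) = addB (\<one>\<^sub>S, \<one>\<^sub>T) (multB Y Z)"
      by (simp add: asym_one_add sigma_add S_criterion del: asym_add_Pair)
  qed
qed

end

end

theorem theorem55:
  fixes addS multS :: "'a \<Rightarrow> 'a \<Rightarrow> 'a" and oneS :: 'a and invS :: "'a \<Rightarrow> 'a"
    and addT multT :: "'b \<Rightarrow> 'b \<Rightarrow> 'b" and oneT :: 'b and invT :: "'b \<Rightarrow> 'b"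
    and sigma :: "'b \<Rightarrow> 'a \<Rightarrow> 'a" and delta :: "'a \<Rightarrow> 'b \<Rightarrow> 'b" and bb :: "'a \<Rightarrow> 'a \<Rightarrow> 'b"
  assumes S: "left_semi_brace addS multS oneS invS"
    and T: "left_semi_brace addT multT oneT invT"
    and solS: "is_solution (assoc_map addS multS invS)"
    and solT: "is_solution (assoc_map addT multT invT)"
    and sigma_aut: "\<forall>u. is_aut addS multS (sigma u)"
    and sigma_hom: "\<forall>u v. sigma (multT u v) = sigma u \<circ> sigma v"
    and delta_end: "\<forall>a u v. delta a (addT u v) = addT (delta a u) (delta a v)"
    and cocycle: "delta_cocycle addS addT delta bb"
    and compat: "\<forall>a b c u v.
       addT (addT (bb (multS a (sigma u b)) (lam addS multS invS a (sigma u c)))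
                  (delta (lam addS multS invS a (sigma u c)) (multT u v)))
            (multT u (addT (bb (sigma (invT u) (invS a)) c) (delta c (invT u))))
       = multT u (addT (bb b c) (delta c v))"
    and cond1: "\<forall>a u. delta a (delta oneS u) = delta a u"
    and cond2: "\<forall>a u. addT (bb oneS a) u = addT oneT u"
    and cond3: "\<forall>a b. bb a (addS oneS b) = bb a b"
  shows "is_solution (assoc_map (asym_add addS addT delta bb) (asym_mult multS multT sigma)
                                (asym_inv invS invT sigma))"
proof -
  interpret asym_product addS multS oneS invS addT multT oneT invT sigma delta bb
    using S T sigma_aut sigma_hom delta_end cocycle compat
    by (simp add: asym_product_def asym_product_axioms_def semi_brace_def)
  show ?thesis
    using is_solution_asym[OF cond2 solS] .
qed

end
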